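(* For any term $t$, any scalars $\alpha,\beta$, any type $T$ and any context $\Gamma$ of the Scalar type system: if $\Gamma\vdash\alpha.(\beta.t):T$ then $\Gamma\vdash(\alpha\times\beta).t:T$.
   Context: Fix a commutative ring $(\mathcal{S},+,\times)$. Terms: $t,r ::= b \mid (t)\,r \mid \mathbf{0} \mid \alpha.t \mid t+r$, basis terms $b ::= x \mid \lambda x\,t$, modulo associativity and commutativity of $+$. Types: $T ::= U \mid \forall X.T \mid \alpha.T \mid \overline{0}$; unit types: $U ::= X \mid U\to T \mid \forall X.U$. Type variables are only substituted by unit types; $(\alpha.T)[U/X]=\alpha.T[U/X]$. Type equivalence $\equiv$ is the least congruence with $\alpha.\overline0\equiv\overline0$, $0.T\equiv\overline0$, $1.T\equiv T$, $\alpha.(\beta.T)\equiv(\alpha\times\beta).T$, $\forall X.\alpha.T\equiv\alpha.\forall X.T$. A context is a set of distinct term variables with unit types. Typing rules: (ax) $\Gamma,x:U\vdash x:U$; ($\equiv$) from $\Gamma\vdash t:T$ and $T\equiv S$ infer $\Gamma\vdash t:S$; ($\to_E$) from $\Gamma\vdash t:\alpha.(U\to T)$ and $\Gamma\vdash r:\beta.U$ infer $\Gamma\vdash (t)\,r:(\alpha\times\beta).T$; ($\to_I$) from $\Gamma,x:U\vdash t:T$ infer $\Gamma\vdash\lambda x\,t:U\to T$; ($\forall_E$) from $\Gamma\vdash t:\forall X.T$ infer $\Gamma\vdash t:T[U/X]$, $U$ unit; ($\forall_I$) from $\Gamma\vdash t:T$ with $X$ not free in $\Gamma$ infer $\Gamma\vdash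 t:\forall X.T$; ($ax_{\overline0}$) $\Gamma\vdash\mathbf 0:\overline0$; ($+_I$) from $\Gamma\vdash t:\alpha.T$ and $\Gamma\vdash r:\beta.T$ infer $\Gamma\vdash t+r:(\alpha+\beta).T$; ($s_I$) from $\Gamma\vdash t:T$ infer $\Gamma\vdash\alpha.t:\alpha.T$. *)

theory Defs
  imports Main
begin

datatype 's trm =
    Var nat
  | Lam nat "'s trm"
  | App "'s trm" "'s trm"
  | Zero
  | Scal 's "'s trm"
  | Plus "'s trm" "'s trm"

text \<open>Terms are considered modulo associativity and commutativity of +:
  the least congruence generated by AC of Plus.\<close>
inductive ac_eq :: "'s trm \<Rightarrow> 's trm \<Rightarrow> bool" where
  ac_refl: "ac_eq t t"
| ac_sym: "ac_eq t r \<Longrightarrow> ac_eq r t"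
| ac_trans: "ac_eq t r \<Longrightarrow> ac_eq r s \<Longrightarrow> ac_eq t s"
| ac_assoc: "ac_eq (Plus (Plus t r) s) (Plus t (Plus r s))"
| ac_comm: "ac_eq (Plus t r) (Plus r t)"
| ac_lam: "ac_eq t t' \<Longrightarrow> ac_eq (Lam x t) (Lam x t')"
| ac_app: "ac_eq t t' \<Longrightarrow> ac_eq r r' \<Longrightarrow> ac_eq (App t r) (App t' r')"
| ac_scal: "ac_eq t t' \<Longrightarrow> ac_eq (Scal a t) (Scal a t')"
| ac_plus: "ac_eq t t' \<Longrightarrow> ac_eq r r' \<Longrightarrow> ac_eq (Plus t r) (Plus t' r')"

text \<open>Types, with type variables as de Bruijn indices (All binds index 0).\<close>
datatype 's ty =
    TVar nat
  | Arr "'s ty" "'s ty"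
  | All "'s ty"
  | SMul 's "'s ty"
  | TZero

inductive unit_ty :: "'s ty \<Rightarrow> bool" and wf_ty :: "'s ty \<Rightarrow> bool" where
  unit_var: "unit_ty (TVar n)"
| unit_arr: "unit_ty U \<Longrightarrow> wf_ty T \<Longrightarrow> unit_ty (Arr U T)"
| unit_all: "unit_ty U \<Longrightarrow> unit_ty (All U)"
| wf_unit: "unit_ty U \<Longrightarrow> wf_ty U"
| wf_all: "wf_ty T \<Longrightarrow> wf_ty (All T)"
| wf_smul: "wf_ty T \<Longrightarrow> wf_ty (SMul a T)"
| wf_zero: "wf_ty TZero"

fun lift :: "nat \<Rightarrow> 's ty \<Rightarrow> 's ty" where
  "lift k (TVar n) = TVar (if n < k then n else Suc n)"
| "lift k (Arr U T) = Arr (lift k U) (lift k T)"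
| "lift k (All T) = All (lift (Suc k) T)"
| "lift k (SMul a T) = SMul a (lift k T)"
| "lift k TZero = TZero"

fun subst :: "nat \<Rightarrow> 's ty \<Rightarrow> 's ty \<Rightarrow> 's ty" where
  "subst k U (TVar n) = (if n < k then TVar n else if n = k then U else TVar (n - 1))"
| "subst k U (Arr V T) = Arr (subst k U V) (subst k U T)"
| "subst k U (All T) = All (subst (Suc k) (lift 0 U) T)"
| "subst k U (SMul a T) = SMul a (subst k U T)"
| "subst k U TZero = TZero"

inductive ty_eq :: "'s::comm_ring_1 ty \<Rightarrow> 's ty \<Rightarrow> bool" where
  teq_refl: "wf_ty T \<Longrightarrow> ty_eq T T"
| teq_sym: "ty_eq T S \<Longrightarrow> ty_eq S T"
| teq_trans: "ty_eq T S \<Longrightarrow> ty_eq S R \<Longrightarrow> ty_eq T R"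
| teq_smul_zero: "ty_eq (SMul a TZero) TZero"
| teq_zero_smul: "wf_ty T \<Longrightarrow> ty_eq (SMul 0 T) TZero"
| teq_one_smul: "wf_ty T \<Longrightarrow> ty_eq (SMul 1 T) T"
| teq_smul_smul: "wf_ty T \<Longrightarrow> ty_eq (SMul a (SMul b T)) (SMul (a * b) T)"
| teq_all_smul: "wf_ty T \<Longrightarrow> ty_eq (All (SMul a T)) (SMul a (All T))"
| teq_arr: "ty_eq U U' \<Longrightarrow> unit_ty U \<Longrightarrow> unit_ty U' \<Longrightarrow> ty_eq T T'
             \<Longrightarrow> ty_eq (Arr U T) (Arr U' T')"
| teq_all: "ty_eq T T' \<Longrightarrow> ty_eq (All T) (All T')"
| teq_smul: "ty_eq T T' \<Longrightarrow> ty_eq (SMul a T) (SMul a T')"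

type_synonym 's ctx = "nat \<Rightarrow> 's ty option"

definition ctx_ok :: "'s ctx \<Rightarrow> bool" where
  "ctx_ok \<Gamma> \<longleftrightarrow> finite (dom \<Gamma>) \<and> (\<forall>x U. \<Gamma> x = Some U \<longrightarrow> unit_ty U)"

definition lift_ctx :: "'s ctx \<Rightarrow> 's ctx" where
  "lift_ctx \<Gamma> = (\<lambda>x. map_option (lift 0) (\<Gamma> x))"

inductive typing :: "'s::comm_ring_1 ctx \<Rightarrow> 's trm \<Rightarrow> 's ty \<Rightarrow> bool" where
  t_ax: "\<Gamma> x = Some U \<Longrightarrow> typing \<Gamma> (Var x) U"
| t_equiv: "typing \<Gamma> t T \<Longrightarrow> ty_eq T S \<Longrightarrow> typing \<Gamma> t S"
| t_arrE: "typing \<Gamma> t (SMul a (Arr U T)) \<Longrightarrow> typing \<Gamma> r (SMul b U)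
             \<Longrightarrow> typing \<Gamma> (App t r) (SMul (a * b) T)"
| t_arrI: "unit_ty U \<Longrightarrow> typing (\<Gamma>(x \<mapsto> U)) t T \<Longrightarrow> typing \<Gamma> (Lam x t) (Arr U T)"
| t_allE: "typing \<Gamma> t (All T) \<Longrightarrow> unit_ty U \<Longrightarrow> typing \<Gamma> t (subst 0 U T)"
| t_allI: "typing (lift_ctx \<Gamma>) t T \<Longrightarrow> typing \<Gamma> t (All T)"
| t_zero: "typing \<Gamma> Zero TZero"
| t_plusI: "typing \<Gamma> t (SMul a T) \<Longrightarrow> typing \<Gamma> r (SMul b T)
             \<Longrightarrow> typing \<Gamma> (Plus t r) (SMul (a + b) T)"
| t_sI: "typing \<Gamma> t T \<Longrightarrow> typing \<Gamma> (Scal a t) (SMul a T)"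
| t_ac: "typing \<Gamma> t T \<Longrightarrow> ac_eq t r \<Longrightarrow> typing \<Gamma> r T"

end

theory Submission
  imports Defs
begin

text \<open>
  The rules \<open>\<equiv>\<close>, \<open>\<forall>\<^sub>E\<close>, \<open>\<forall>\<^sub>I\<close> and
  the AC rule commute with replacing the subject by \<open>(\<alpha>\<times>\<beta>).t\<close>, so the interesting case is
  \<open>s\<^sub>I\<close>: there \<open>\<Gamma> \<turnstile> \<beta>.t : T'\<close> and \<open>T = \<alpha>.T'\<close>. A second induction shows that any such
  judgement yields \<open>\<Gamma> \<turnstile> (\<alpha>\<times>\<beta>).t : \<alpha>.T'\<close>; its \<open>s\<^sub>I\<close> case is the equivalence
  \<open>(\<alpha>\<times>\<beta>).T'' \<equiv> \<alpha>.(\<beta>.T'')\<close>, and its \<open>\<forall>\<close> cases push the scalar through the quantifier with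
  \<open>\<forall>X.\<alpha>.T \<equiv> \<alpha>.\<forall>X.T\<close>. These equivalences only hold between well-formed types, which is
  why typing is first shown to produce well-formed types.
\<close>

lemma unit_ty_lift: "unit_ty T \<Longrightarrow> unit_ty (lift k T)"
  and wf_ty_lift: "wf_ty T \<Longrightarrow> wf_ty (lift k T)"
  by (induction T and T arbitrary: k and k rule: unit_ty_wf_ty.inducts)
     (auto intro: unit_ty_wf_ty.intros)

lemma unit_ty_subst: "unit_ty T \<Longrightarrow> unit_ty U \<Longrightarrow> unit_ty (subst k U T)"
  and wf_ty_subst: "wf_ty T \<Longrightarrow> unit_ty U \<Longrightarrow> wf_ty (subst k U T)"
  by (induction T and T arbitrary: k U and k U rule: unit_ty_wf_ty.inducts)
     (simp_all, (metis unit_ty_wf_ty.intros unit_ty_lift)+)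

inductive_cases unit_ty_SMulE: "unit_ty (SMul a T)"
inductive_cases unit_ty_ArrE: "unit_ty (Arr U T)"
inductive_cases unit_ty_AllE: "unit_ty (All T)"
inductive_cases wf_ty_SMulE: "wf_ty (SMul a T)"
inductive_cases wf_ty_ArrE: "wf_ty (Arr U T)"
inductive_cases wf_ty_AllE: "wf_ty (All T)"

lemma wf_ty_SMulD: "wf_ty (SMul a T) \<Longrightarrow> wf_ty T"
  by (auto elim: wf_ty_SMulE unit_ty_SMulE)

lemma wf_ty_ArrD: "wf_ty (Arr U T) \<Longrightarrow> wf_ty T"
  by (auto elim!: wf_ty_ArrE unit_ty_ArrE)

lemma wf_ty_AllD: "wf_ty (All T) \<Longrightarrow> wf_ty T"
  by (auto elim!: wf_ty_AllE unit_ty_AllE intro: wf_unit)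

lemma ty_eq_wf_ty: "ty_eq T S \<Longrightarrow> wf_ty T \<and> wf_ty S"
  by (induction rule: ty_eq.induct) (auto intro: unit_ty_wf_ty.intros)

lemma ctx_ok_lift_ctx: "ctx_ok \<Gamma> \<Longrightarrow> ctx_ok (lift_ctx \<Gamma>)"
  unfolding ctx_ok_def lift_ctx_def by (auto simp: dom_def intro: unit_ty_lift)

lemma ctx_ok_fun_upd: "ctx_ok \<Gamma> \<Longrightarrow> unit_ty U \<Longrightarrow> ctx_ok (\<Gamma>(x \<mapsto> U))"
  unfolding ctx_ok_def by auto

lemma typing_wf_ty: "typing \<Gamma> t T \<Longrightarrow> ctx_ok \<Gamma> \<Longrightarrow> wf_ty T"
proof (induction rule: typing.induct)
  case (t_ax \<Gamma> x U)
  then show ?case by (auto simp: ctx_ok_def intro: wf_unit)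
next
  case (t_equiv \<Gamma> t T S)
  then show ?case using ty_eq_wf_ty by blast
next
  case (t_arrE \<Gamma> t a U T r b)
  then show ?case by (auto intro: wf_smul dest: wf_ty_SMulD wf_ty_ArrD)
next
  case (t_arrI U \<Gamma> x t T)
  then show ?case by (metis wf_unit unit_arr ctx_ok_fun_upd)
next
  case (t_allE \<Gamma> t T U)
  then show ?case by (auto intro: wf_ty_subst dest: wf_ty_AllD)
next
  case (t_allI \<Gamma> t T)
  then show ?case by (auto intro: wf_all ctx_ok_lift_ctx)
next
  case (t_plusI \<Gamma> t a T r b)
  then show ?case by (auto intro: wf_smul dest: wf_ty_SMulD)
qed (auto intro: unit_ty_wf_ty.intros)

lemma ac_eq_Scal_cases:
  "ac_eq u v \<Longrightarrow>
     (\<forall>a s. u = Scal a s \<longrightarrow> (\<exists>s'. v = Scal a s' \<and> ac_eq s s')) \<and>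
     (\<forall>a s. v = Scal a s \<longrightarrow> (\<exists>s'. u = Scal a s' \<and> ac_eq s' s))"
proof (induction rule: ac_eq.induct)
  case (ac_sym t r)
  have "\<exists>s'. t = Scal a s' \<and> ac_eq s s'" if "r = Scal a s" for a s
  proof -
    from that ac_sym.IH obtain s' where "t = Scal a s'" and "ac_eq s' s" by blast
    with ac_eq.ac_sym show ?thesis by blast
  qed
  moreover have "\<exists>s'. r = Scal a s' \<and> ac_eq s' s" if "t = Scal a s" for a s
  proof -
    from that ac_sym.IH obtain s' where "r = Scal a s'" and "ac_eq s s'" by blast
    with ac_eq.ac_sym show ?thesis by blast
  qed
  ultimately show ?case by blast
next
  case (ac_trans t r v)
  have "\<exists>s''. v = Scal a s'' \<and> ac_eq s s''" if "t = Scal a s" for a s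
  proof -
    from that ac_trans.IH(1) obtain s' where "r = Scal a s'" and "ac_eq s s'" by blast
    moreover from \<open>r = Scal a s'\<close> ac_trans.IH(2)
    obtain s'' where "v = Scal a s''" and "ac_eq s' s''" by blast
    ultimately show ?thesis using ac_eq.ac_trans by blast
  qed
  moreover have "\<exists>s''. t = Scal a s'' \<and> ac_eq s'' s" if "v = Scal a s" for a s
  proof -
    from that ac_trans.IH(2) obtain s' where "r = Scal a s'" and "ac_eq s' s" by blast
    moreover from \<open>r = Scal a s'\<close> ac_trans.IH(1)
    obtain s'' where "t = Scal a s''" and "ac_eq s'' s'" by blast
    ultimately show ?thesis using ac_eq.ac_trans by blast
  qed
  ultimately show ?case by blast
qed (auto intro: ac_eq.ac_refl)

lemma ac_eq_ScalD: "ac_eq u (Scal a s) \<Longrightarrow> \<exists>s'. u = Scal a s' \<and> ac_eq s' s"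
  using ac_eq_Scal_cases by blast

lemma typing_Scal_scale:
  "typing \<Gamma> u T \<Longrightarrow> ctx_ok \<Gamma> \<Longrightarrow> u = Scal b t \<Longrightarrow> typing \<Gamma> (Scal (a * b) t) (SMul a T)"
proof (induction arbitrary: t rule: typing.induct)
  case (t_equiv \<Gamma> u T S)
  from t_equiv.IH[OF t_equiv.prems] teq_smul[OF t_equiv.hyps(2)]
  show ?case by (rule typing.t_equiv)
next
  case (t_allE \<Gamma> u T U)
  have "wf_ty T"
    using typing_wf_ty[OF t_allE.hyps(1) t_allE.prems(1)] by (rule wf_ty_AllD)
  with t_allE.IH[OF t_allE.prems] have "typing \<Gamma> (Scal (a * b) t) (All (SMul a T))"
    by (blast intro: typing.t_equiv[OF _ teq_sym[OF teq_all_smul]])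
  then have "typing \<Gamma> (Scal (a * b) t) (subst 0 U (SMul a T))"
    using t_allE.hyps(2) by (rule typing.t_allE)
  then show ?case by simp
next
  case (t_allI \<Gamma> u T)
  have ok: "ctx_ok (lift_ctx \<Gamma>)"
    using t_allI.prems(1) by (rule ctx_ok_lift_ctx)
  have "typing \<Gamma> (Scal (a * b) t) (All (SMul a T))"
    using t_allI.IH[OF ok t_allI.prems(2)] by (rule typing.t_allI)
  moreover have "wf_ty T"
    using t_allI.hyps ok by (rule typing_wf_ty)
  ultimately show ?case by (blast intro: typing.t_equiv[OF _ teq_all_smul])
next
  case (t_sI \<Gamma> u T c)
  then have "u = t" and "c = b" and "wf_ty T"
    by (auto intro: typing_wf_ty)
  with t_sI.hyps have "typing \<Gamma> (Scal (a * b) t) (SMul (a * b) T)"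
    by (blast intro: typing.t_sI)
  from typing.t_equiv[OF this teq_sym[OF teq_smul_smul[OF \<open>wf_ty T\<close>]]]
  show ?case using \<open>c = b\<close> by simp
next
  case (t_ac \<Gamma> u T r)
  from t_ac.hyps(2) t_ac.prems(2) obtain s where "u = Scal b s" and "ac_eq s t"
    by (blast dest: ac_eq_ScalD)
  from t_ac.IH[OF t_ac.prems(1) \<open>u = Scal b s\<close>] ac_scal[OF \<open>ac_eq s t\<close>]
  show ?case by (rule typing.t_ac)
qed simp_all

lemma typing_Scal_Scal:
  "typing \<Gamma> u T \<Longrightarrow> ctx_ok \<Gamma> \<Longrightarrow> u = Scal a (Scal b t) \<Longrightarrow> typing \<Gamma> (Scal (a * b) t) T"
proof (induction arbitrary: t rule: typing.induct)
  case (t_equiv \<Gamma> u T S)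
  from t_equiv.IH[OF t_equiv.prems] t_equiv.hyps(2) show ?case by (rule typing.t_equiv)
next
  case (t_allE \<Gamma> u T U)
  from t_allE.IH[OF t_allE.prems] t_allE.hyps(2) show ?case by (rule typing.t_allE)
next
  case (t_allI \<Gamma> u T)
  from t_allI.IH[OF ctx_ok_lift_ctx[OF t_allI.prems(1)] t_allI.prems(2)]
  show ?case by (rule typing.t_allI)
next
  case (t_sI \<Gamma> u T c)
  then have "u = Scal b t" and "c = a" by auto
  with t_sI.hyps t_sI.prems(1) show ?case using typing_Scal_scale by blast
next
  case (t_ac \<Gamma> u T r)
  from t_ac.hyps(2) t_ac.prems(2) obtain s' where "u = Scal a s'" and "ac_eq s' (Scal b t)"
    by (blast dest: ac_eq_ScalD)
  then obtain s where "u = Scal a (Scal b s)" and "ac_eq s t"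
    by (blast dest: ac_eq_ScalD)
  from t_ac.IH[OF t_ac.prems(1) \<open>u = Scal a (Scal b s)\<close>] ac_scal[OF \<open>ac_eq s t\<close>]
  show ?case by (rule typing.t_ac)
qed simp_all

theorem mainTheorem10:
  fixes \<Gamma> :: "'s::comm_ring_1 ctx" and t :: "'s trm" and a b :: 's and T :: "'s ty"
  assumes "ctx_ok \<Gamma>" and "wf_ty T"
    and "typing \<Gamma> (Scal a (Scal b t)) T"
  shows "typing \<Gamma> (Scal (a * b) t) T"
  using assms(3,1) refl by (rule typing_Scal_Scal)

end
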